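(* Let $q\in[1,\infty]$, $(d_M)_{M\in\mathbb N}\in\mathbb N^{\mathbb N}$, $(r_M)_{M\in\mathbb N}$ reals with $r_M\ge1$, and let $\Sigma_M=B_{d_M,\|\cdot\|_q}(0,r_M)$ be the set of sequences in $\ell^q(\mathbb N)$ of $\ell^q$-norm at most $r_M$ with all coordinates beyond the first $d_M$ equal to zero. Then $\Sigma=(\Sigma_M)_M$ is either $\infty$-encodable in $\ell^q(\mathbb N)$ or $\gamma$-encodable in $\ell^q(\mathbb N)$ for no $\gamma>0$. Moreover, $\Sigma$ is $\infty$-encodable if and only if $d_M(\log_2(r_M)+1)=O(M^{1+h})$ as $M\to\infty$ for every $h>0$.
   Context: A finite $X\subset A$ is an $\varepsilon$-covering of $A$ (in a metric space) if every point of $A$ is within distance $\varepsilon$ of some point of $X$. For $\gamma,h>0$, a $(\gamma,h)$-encoding of $\Sigma=(\Sigma_M)_M$ is a sequence $(\Sigma(\gamma,h)_M)_M$ such that for some $c_1,c_2>0$ and all $M$, $\Sigma(\gamma,h)_M$ is a $c_1M^{-\gamma}$-covering of $\Sigma_M$ with $\log_2|\Sigma(\gamma,h)_M|\le c_2M^{1+h}$. $\Sigma$ is $\gamma$-encodable if it admits a $(\gamma,h)$-encoding for every $h>0$, and $\infty$-encodable if it is $\gamma$-encodable for every $\gamma>0$. *)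

theory Defs
  imports "HOL-Analysis.Analysis" "HOL-Library.Landau_Symbols"
begin

definition lq_space :: "ereal \<Rightarrow> (nat \<Rightarrow> real) set" where
  "lq_space q = (if q = \<infinity> then {x. bounded (range (\<lambda>n. x n))}
                 else {x. summable (\<lambda>n. \<bar>x n\<bar> powr real_of_ereal q)})"

definition lq_norm :: "ereal \<Rightarrow> (nat \<Rightarrow> real) \<Rightarrow> real" where
  "lq_norm q x = (if q = \<infinity> then (SUP n. \<bar>x n\<bar>)
                  else (\<Sum>n. \<bar>x n\<bar> powr real_of_ereal q) powr (1 / real_of_ereal q))"

definition lq_ball_fin :: "ereal \<Rightarrow> nat \<Rightarrow> real \<Rightarrow> (nat \<Rightarrow> real) set" where
  "lq_ball_fin q d r = {x \<in> lq_space q. lq_norm q x \<le> r \<and> (\<forall>n\<ge>d. x n = 0)}"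

definition lq_covering :: "ereal \<Rightarrow> (nat \<Rightarrow> real) set \<Rightarrow> (nat \<Rightarrow> real) set \<Rightarrow> real \<Rightarrow> bool" where
  "lq_covering q A X \<epsilon> \<longleftrightarrow> finite X \<and> X \<subseteq> A \<and> (\<forall>a\<in>A. \<exists>x\<in>X. lq_norm q (a - x) \<le> \<epsilon>)"

definition has_encoding :: "ereal \<Rightarrow> (nat \<Rightarrow> (nat \<Rightarrow> real) set) \<Rightarrow> real \<Rightarrow> real \<Rightarrow> bool" where
  "has_encoding q S \<gamma> h \<longleftrightarrow> (\<exists>c1>0. \<exists>c2>0. \<forall>M\<ge>1. \<exists>X.
      lq_covering q (S M) X (c1 * real M powr (-\<gamma>)) \<and> log 2 (real (card X)) \<le> c2 * real M powr (1 + h))"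

definition gamma_encodable :: "ereal \<Rightarrow> (nat \<Rightarrow> (nat \<Rightarrow> real) set) \<Rightarrow> real \<Rightarrow> bool" where
  "gamma_encodable q S \<gamma> \<longleftrightarrow> (\<forall>h>0. has_encoding q S \<gamma> h)"

definition inf_encodable :: "ereal \<Rightarrow> (nat \<Rightarrow> (nat \<Rightarrow> real) set) \<Rightarrow> bool" where
  "inf_encodable q S \<longleftrightarrow> (\<forall>\<gamma>>0. gamma_encodable q S \<gamma>)"

end

theory Submission
  imports Defs "HOL-Real_Asymp.Real_Asymp"
begin

text \<open>Both directions rest on two-sided bounds for the metric entropy of the \<open>d\<close>-dimensional
  \<open>\<ell>\<^sup>q\<close>-ball of radius \<open>r \<ge> 1\<close>.
  Rounding every coordinate toward zero to the lattice \<open>(\<epsilon>/(d+1))\<int>\<close> stays inside the ball and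
  moves each point by at most \<open>\<epsilon>\<close>, which gives \<open>\<epsilon>\<close>-coverings with
  \<open>log\<^sub>2 |X| \<le> d log\<^sub>2 (5(d+1)r/\<epsilon>)\<close>.
  Conversely, the grid \<open>\<sigma>{0,\<dots>,k-1}\<^sup>d\<close> with \<open>\<sigma> = r d\<^bsup>-1/q\<^esup>/k\<close> and \<open>k \<approx> r/(8\<epsilon>)\<close>
  lies in the ball, and a point within \<open>\<epsilon>\<close> of a grid point must be within \<open>\<sigma>/2\<close> of it in
  more than half of the coordinates; so one \<open>\<epsilon>\<close>-ball contains at most \<open>2\<^sup>d k\<^bsup>d/2\<^esup>\<close> of the
  \<open>k\<^sup>d\<close> grid points, whence \<open>log\<^sub>2 |X| \<ge> d(log\<^sub>2 r + 1)/2\<close> once \<open>\<epsilon> \<le> 1/128\<close>.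
  At scale \<open>\<epsilon> = c M\<^bsup>-\<gamma>\<^esup>\<close> the two bounds differ only by logarithmic factors, so
  \<open>\<gamma>\<close>-encodability for a single \<open>\<gamma>\<close> forces \<open>d\<^sub>M(log\<^sub>2 r\<^sub>M + 1) = O(M\<^bsup>1+h\<^esup>)\<close> for all
  \<open>h > 0\<close>, and this growth condition in turn yields \<open>(\<gamma>,h)\<close>-encodings for all \<open>\<gamma>, h\<close>.\<close>

definition supp_below :: "nat \<Rightarrow> (nat \<Rightarrow> real) \<Rightarrow> bool" where
  "supp_below d x \<longleftrightarrow> (\<forall>n\<ge>d. x n = 0)"

lemma supp_below_diff: "supp_below d x \<Longrightarrow> supp_below d y \<Longrightarrow> supp_below d (x - y)"
  by (simp add: supp_below_def)

lemma supp_below_imp_in_lq_space: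
  assumes "supp_below d x" shows "x \<in> lq_space q"
proof -
  have zero: "x n = 0" if "n \<notin> {..<d}" for n using assms that by (simp add: supp_below_def)
  have "range x \<subseteq> insert 0 (x ` {..<d})" using zero by auto
  then have "bounded (range x)" by (rule bounded_subset[rotated]) (simp add: finite_imp_bounded)
  moreover have "summable (\<lambda>n. \<bar>x n\<bar> powr real_of_ereal q)"
    by (rule summable_finite[of "{..<d}"]) (auto simp: zero)
  ultimately show ?thesis by (simp add: lq_space_def)
qed

lemma mem_lq_ball_fin_iff: "x \<in> lq_ball_fin q d r \<longleftrightarrow> supp_below d x \<and> lq_norm q x \<le> r"
  using supp_below_imp_in_lq_space by (auto simp: lq_ball_fin_def supp_below_def)

lemma lq_norm_ereal_supp_below:
  assumes "supp_below d x"
  shows "lq_norm (ereal p) x = (\<Sum>n<d. \<bar>x n\<bar> powr p) powr (1/p)"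
proof -
  have "(\<Sum>n. \<bar>x n\<bar> powr p) = (\<Sum>n<d. \<bar>x n\<bar> powr p)"
    by (rule suminf_finite) (use assms in \<open>auto simp: supp_below_def\<close>)
  then show ?thesis by (simp add: lq_norm_def)
qed

lemma bdd_above_abs_supp_below:
  assumes "supp_below d x" shows "bdd_above (range (\<lambda>n. \<bar>x n\<bar>))"
proof -
  have "\<bar>x n\<bar> \<in> insert 0 ((\<lambda>n. \<bar>x n\<bar>) ` {..<d})" for n
    using assms by (cases "n < d") (auto simp: supp_below_def)
  then have "range (\<lambda>n. \<bar>x n\<bar>) \<subseteq> insert 0 ((\<lambda>n. \<bar>x n\<bar>) ` {..<d})" by blast
  then show ?thesis by (rule bdd_above_mono[rotated]) simp
qed

lemma lq_norm_infty_le_iff: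
  assumes "supp_below d x" shows "lq_norm \<infinity> x \<le> c \<longleftrightarrow> (\<forall>n. \<bar>x n\<bar> \<le> c)"
  using bdd_above_abs_supp_below[OF assms] by (simp add: lq_norm_def cSUP_le_iff)

lemma abs_le_lq_norm_infty:
  assumes "supp_below d x" shows "\<bar>x n\<bar> \<le> lq_norm \<infinity> x"
  using lq_norm_infty_le_iff[OF assms] by blast

lemma ereal_ge_one_cases:
  assumes "1 \<le> q"
  obtains "q = \<infinity>" | p where "q = ereal p" "1 \<le> p"
  using assms by (cases q) auto

lemma abs_le_lq_norm:
  assumes "1 \<le> q" "supp_below d x" shows "\<bar>x i\<bar> \<le> lq_norm q x"
proof (cases rule: ereal_ge_one_cases[OF assms(1)])
  case 1
  then show ?thesis using abs_le_lq_norm_infty[OF assms(2)] by simp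
next
  case (2 p)
  show ?thesis
  proof (cases "i < d")
    case True
    have "\<bar>x i\<bar> = (\<bar>x i\<bar> powr p) powr (1/p)" using 2 by (simp add: powr_powr)
    also have "\<dots> \<le> (\<Sum>n<d. \<bar>x n\<bar> powr p) powr (1/p)"
      using True 2 by (intro powr_mono2 member_le_sum) auto
    finally show ?thesis using 2 lq_norm_ereal_supp_below[OF assms(2)] by simp
  next
    case False
    then show ?thesis using 2 assms(2) by (simp add: lq_norm_ereal_supp_below supp_below_def)
  qed
qed

lemma lq_norm_mono:
  assumes "1 \<le> q" "supp_below d x" "supp_below d y" "\<And>i. \<bar>y i\<bar> \<le> \<bar>x i\<bar>"
  shows "lq_norm q y \<le> lq_norm q x"
proof (cases rule: ereal_ge_one_cases[OF assms(1)])
  case 1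
  then show ?thesis using lq_norm_infty_le_iff[OF assms(3)] abs_le_lq_norm_infty[OF assms(2)] assms(4)
    by (meson order_trans)
next
  case (2 p)
  have "(\<Sum>n<d. \<bar>y n\<bar> powr p) powr (1/p) \<le> (\<Sum>n<d. \<bar>x n\<bar> powr p) powr (1/p)"
    using 2 assms(4) by (intro powr_mono2 sum_mono sum_nonneg) auto
  then show ?thesis using 2 lq_norm_ereal_supp_below assms(2,3) by simp
qed

text \<open>\<open>flat_coord q d = d\<^bsup>-1/q\<^esup>\<close> is the common value of the coordinates of a flat unit vector
  in dimension \<open>d\<close>; for \<open>d = 0\<close> and finite \<open>q\<close> it is the junk value \<open>0\<close>.\<close>

definition flat_coord :: "ereal \<Rightarrow> nat \<Rightarrow> real" where
  "flat_coord q d = (if q = \<infinity> then 1 else real d powr (-1 / real_of_ereal q))"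

lemma flat_coord_nonneg: "0 \<le> flat_coord q d"
  by (simp add: flat_coord_def)

lemma flat_coord_pos: "0 < d \<Longrightarrow> 0 < flat_coord q d"
  by (simp add: flat_coord_def)

lemma flat_coord_ge:
  assumes "1 \<le> q" "0 < d" shows "1 / real d \<le> flat_coord q d"
proof (cases rule: ereal_ge_one_cases[OF assms(1)])
  case 1
  then show ?thesis using assms by (simp add: flat_coord_def)
next
  case (2 p)
  have "real d powr (-1) \<le> real d powr (-1/p)"
    using 2 assms by (intro powr_mono) (auto simp: field_simps)
  then show ?thesis using 2 assms by (simp add: flat_coord_def powr_minus divide_inverse)
qed

lemma flat_coord_powr:
  assumes "q = ereal p" "1 \<le> p" "0 \<le> c"
  shows "(c * flat_coord q d) powr p = c powr p / real d"
proof -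
  have "(c * flat_coord q d) powr p = c powr p * flat_coord q d powr p"
    using assms(3) flat_coord_nonneg by (simp add: powr_mult)
  also have "flat_coord q d powr p = real d powr (-1/p * p)"
    using assms by (simp add: flat_coord_def powr_powr)
  also have "\<dots> = 1 / real d"
    using assms by (cases "d = 0") (simp_all add: powr_minus_divide)
  finally show ?thesis by simp
qed

lemma lq_norm_le_if_coords_le:
  assumes "1 \<le> q" "supp_below d x" "0 \<le> c" "\<And>i. i < d \<Longrightarrow> \<bar>x i\<bar> \<le> c * flat_coord q d"
  shows "lq_norm q x \<le> c"
proof (cases rule: ereal_ge_one_cases[OF assms(1)])
  case 1
  have "\<bar>x n\<bar> \<le> c" for n
    using assms 1 by (cases "n < d") (auto simp: flat_coord_def supp_below_def)
  then show ?thesis using lq_norm_infty_le_iff[OF assms(2)] 1 by simp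
next
  case (2 p)
  have "(\<Sum>n<d. \<bar>x n\<bar> powr p) \<le> (\<Sum>n<d. (c * flat_coord q d) powr p)"
    using 2 assms(4) by (intro sum_mono powr_mono2) auto
  also have "\<dots> \<le> c powr p"
    using 2 assms(3) by (simp add: flat_coord_powr)
  finally have "(\<Sum>n<d. \<bar>x n\<bar> powr p) powr (1/p) \<le> (c powr p) powr (1/p)"
    using 2 by (intro powr_mono2) (auto intro: sum_nonneg)
  then show ?thesis using 2 assms(3) by (simp add: lq_norm_ereal_supp_below[OF assms(2)] powr_powr)
qed

lemma lq_norm_ge_if_half_coords_ge:
  assumes "1 \<le> q" "supp_below d x" "0 \<le> c" "0 < d" "D \<subseteq> {..<d}" "real d \<le> 2 * real (card D)"
    "\<And>i. i \<in> D \<Longrightarrow> c * flat_coord q d \<le> \<bar>x i\<bar>"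
  shows "c / 2 \<le> lq_norm q x"
proof (cases rule: ereal_ge_one_cases[OF assms(1)])
  case 1
  obtain i where "i \<in> D" using assms(4,6) by fastforce
  then show ?thesis using assms(3) assms(7)[of i] abs_le_lq_norm_infty[OF assms(2), of i] 1
    by (simp add: flat_coord_def)
next
  case (2 p)
  have "c powr p / 2 \<le> real (card D) * (c powr p / real d)"
    using assms(4) mult_right_mono[OF assms(6), of "c powr p"] by (simp add: field_simps)
  also have "\<dots> = (\<Sum>n\<in>D. (c * flat_coord q d) powr p)"
    using 2 assms(3) by (simp add: flat_coord_powr)
  also have "\<dots> \<le> (\<Sum>n\<in>D. \<bar>x n\<bar> powr p)"
    using 2 assms(3,7) flat_coord_nonneg by (intro sum_mono powr_mono2) auto
  also have "\<dots> \<le> (\<Sum>n<d. \<bar>x n\<bar> powr p)"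
    using assms(5) by (intro sum_mono2) auto
  finally have "(c powr p / 2) powr (1/p) \<le> lq_norm q x"
    using 2 by (simp add: lq_norm_ereal_supp_below[OF assms(2)] powr_mono2)
  moreover have "c / 2 \<le> (c powr p / 2) powr (1/p)"
  proof -
    have "2 powr (1/p) \<le> 2 powr 1" using 2 by (intro powr_mono) auto
    then have "c / 2 \<le> c / 2 powr (1/p)" using assms(3) by (intro divide_left_mono) auto
    also have "\<dots> = (c powr p / 2) powr (1/p)" using 2 assms(3) by (simp add: powr_divide powr_powr)
    finally show ?thesis .
  qed
  ultimately show ?thesis by linarith
qed

definition far_coords :: "nat \<Rightarrow> (nat \<Rightarrow> real) \<Rightarrow> (nat \<Rightarrow> nat) \<Rightarrow> nat set" where
  "far_coords d y s = {i \<in> {..<d}. 1/2 \<le> \<bar>real (s i) - y i\<bar>}"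

lemma far_coords_subset: "far_coords d y s \<subseteq> {..<d}"
  by (auto simp: far_coords_def)

lemma inj_on_far_coords_restrict:
  "inj_on (\<lambda>s. (far_coords d y s, restrict s (far_coords d y s))) (PiE {..<d} (\<lambda>_. {..<k}))"
proof (rule inj_onI)
  fix s s' assume s: "s \<in> PiE {..<d} (\<lambda>_. {..<k})" and s': "s' \<in> PiE {..<d} (\<lambda>_. {..<k})"
    and eq: "(far_coords d y s, restrict s (far_coords d y s))
           = (far_coords d y s', restrict s' (far_coords d y s'))"
  show "s = s'"
  proof (rule PiE_ext[OF s s'])
    fix i assume i: "i \<in> {..<d}"
    show "s i = s' i"
    proof (cases "i \<in> far_coords d y s")
      case True
      then show ?thesis using eq by (metis Pair_inject restrict_apply')
    next
      case False
      moreover have "far_coords d y s = far_coords d y s'" using eq by simp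
      ultimately have "i \<notin> far_coords d y s" "i \<notin> far_coords d y s'" by simp_all
      then have "\<bar>real (s i) - y i\<bar> < 1/2" "\<bar>real (s' i) - y i\<bar> < 1/2"
        using i by (simp_all add: far_coords_def)
      then have "real (s i) < real (s' i) + 1" "real (s' i) < real (s i) + 1" by linarith+
      then show ?thesis by linarith
    qed
  qed
qed

lemma card_functions_on_small_subsets_le:
  assumes "1 \<le> k"
  shows "real (card (Sigma {B. B \<subseteq> {..<d} \<and> 2 * card B < d} (\<lambda>B. PiE B (\<lambda>_. {..<k}))))
         \<le> 2 ^ d * real k powr (real d / 2)"
proof -
  define \<B> where "\<B> = {B. B \<subseteq> {..<d} \<and> 2 * card B < d}"
  have fin_\<B>: "finite \<B>" by (rule finite_subset[of _ "Pow {..<d}"]) (auto simp: \<B>_def)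
  have fin_B: "finite B" if "B \<in> \<B>" for B
    using that by (auto simp: \<B>_def intro: finite_subset)
  have "card (Sigma \<B> (\<lambda>B. PiE B (\<lambda>_. {..<k}))) = (\<Sum>B\<in>\<B>. k ^ card B)"
    using fin_\<B> fin_B by (simp add: card_PiE finite_PiE)
  then have "real (card (Sigma \<B> (\<lambda>B. PiE B (\<lambda>_. {..<k})))) = (\<Sum>B\<in>\<B>. real k ^ card B)"
    by (simp flip: of_nat_sum of_nat_power)
  also have "\<dots> \<le> (\<Sum>B\<in>\<B>. real k powr (real d / 2))"
  proof (rule sum_mono)
    fix B assume "B \<in> \<B>"
    then have "real (card B) \<le> real d / 2" by (simp add: \<B>_def)
    then show "real k ^ card B \<le> real k powr (real d / 2)"
      using assms by (simp add: powr_realpow[symmetric] powr_mono)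
  qed
  also have "\<dots> \<le> 2 ^ d * real k powr (real d / 2)"
  proof -
    have "card \<B> \<le> card (Pow {..<d})" by (rule card_mono) (auto simp: \<B>_def)
    then show ?thesis by (simp add: card_Pow mult_right_mono)
  qed
  finally show ?thesis by (simp add: \<B>_def)
qed

lemma card_grid_mostly_near_le:
  assumes "1 \<le> k"
  shows "real (card {s \<in> PiE {..<d} (\<lambda>_. {..<k}). 2 * card (far_coords d y s) < d})
         \<le> 2 ^ d * real k powr (real d / 2)"
proof -
  define T where "T = {s \<in> PiE {..<d} (\<lambda>_. {..<k}). 2 * card (far_coords d y s) < d}"
  define S where "S = Sigma {B. B \<subseteq> {..<d} \<and> 2 * card B < d} (\<lambda>B. PiE B (\<lambda>_. {..<k}))"
  have "inj_on (\<lambda>s. (far_coords d y s, restrict s (far_coords d y s))) T"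
    by (rule inj_on_subset[OF inj_on_far_coords_restrict]) (auto simp: T_def)
  moreover have "(\<lambda>s. (far_coords d y s, restrict s (far_coords d y s))) ` T \<subseteq> S"
    using far_coords_subset by (fastforce simp: T_def S_def restrict_PiE_iff PiE_iff)
  moreover have "finite S"
    unfolding S_def by (rule finite_SigmaI) (auto intro: finite_PiE finite_subset)
  ultimately have "card T \<le> card S" by (rule card_inj_on_le)
  then show ?thesis
    using card_functions_on_small_subsets_le[OF assms, of d] by (simp add: T_def S_def)
qed

definition grid_point :: "nat \<Rightarrow> real \<Rightarrow> (nat \<Rightarrow> nat) \<Rightarrow> nat \<Rightarrow> real" where
  "grid_point d \<sigma> s i = (if i < d then real (s i) * \<sigma> else 0)"

lemma supp_below_grid_point: "supp_below d (grid_point d \<sigma> s)"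
  by (simp add: supp_below_def grid_point_def)

lemma grid_point_mem_lq_ball_fin:
  assumes q: "1 \<le> q" and r: "0 \<le> r" and \<sigma>: "0 \<le> \<sigma>" and k\<sigma>: "real k * \<sigma> \<le> r * flat_coord q d"
    and s: "s \<in> PiE {..<d} (\<lambda>_. {..<k})"
  shows "grid_point d \<sigma> s \<in> lq_ball_fin q d r"
proof -
  have "\<bar>grid_point d \<sigma> s i\<bar> \<le> r * flat_coord q d" if "i < d" for i
  proof -
    have "real (s i) \<le> real k" using s that by (auto simp: PiE_def Pi_def)
    then have "real (s i) * \<sigma> \<le> real k * \<sigma>" using \<sigma> by (simp add: mult_right_mono)
    then show ?thesis using that \<sigma> k\<sigma> by (simp add: grid_point_def)
  qed
  then show ?thesis
    using lq_norm_le_if_coords_le[OF q supp_below_grid_point r]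
    by (simp add: mem_lq_ball_fin_iff supp_below_grid_point)
qed

lemma lq_norm_grid_point_diff_ge:
  assumes q: "1 \<le> q" and d: "0 < d" and \<sigma>: "0 < \<sigma>" and x: "supp_below d x"
    and many_far: "real d \<le> 2 * real (card (far_coords d (\<lambda>i. x i / \<sigma>) s))"
  shows "\<sigma> / (4 * flat_coord q d) \<le> lq_norm q (grid_point d \<sigma> s - x)"
proof -
  define g where "g = grid_point d \<sigma> s"
  have w: "0 < flat_coord q d" using flat_coord_pos[OF d] .
  have supp: "supp_below d (g - x)" using x by (simp add: g_def supp_below_grid_point supp_below_diff)
  have coords: "\<sigma> / (2 * flat_coord q d) * flat_coord q d \<le> \<bar>(g - x) i\<bar>"
    if "i \<in> far_coords d (\<lambda>i. x i / \<sigma>) s" for i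
  proof -
    have "(g - x) i = \<sigma> * (real (s i) - x i / \<sigma>)"
      using that \<sigma> by (simp add: far_coords_def g_def grid_point_def algebra_simps)
    then have "\<bar>(g - x) i\<bar> = \<sigma> * \<bar>real (s i) - x i / \<sigma>\<bar>" using \<sigma> by (simp add: abs_mult)
    moreover have "\<sigma> / 2 \<le> \<sigma> * \<bar>real (s i) - x i / \<sigma>\<bar>" using that \<sigma> by (simp add: far_coords_def)
    ultimately show ?thesis using w by simp
  qed
  have "\<sigma> / (2 * flat_coord q d) / 2 \<le> lq_norm q (g - x)"
    by (rule lq_norm_ge_if_half_coords_ge[OF q supp _ d far_coords_subset many_far coords])
      (use \<sigma> w in simp)
  then show ?thesis by (simp add: g_def)
qed

lemma lq_ball_fin_covering_card_ge:
  assumes q: "1 \<le> q" and d: "0 < d" and k: "1 \<le> k" and eps: "0 < eps"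
    and small: "4 * real k * eps < r"
    and cov: "lq_covering q (lq_ball_fin q d r) X eps"
  shows "real k ^ d \<le> real (card X) * (2 ^ d * real k powr (real d / 2))"
proof -
  have "0 < 4 * real k * eps" using k eps by simp
  then have r: "0 < r" using small by linarith
  define \<sigma> where "\<sigma> = r * flat_coord q d / real k"
  have \<sigma>: "0 < \<sigma>" using r k flat_coord_pos[OF d] by (simp add: \<sigma>_def)
  have k\<sigma>: "real k * \<sigma> = r * flat_coord q d" using k by (simp add: \<sigma>_def)
  define G where "G = PiE {..<d} (\<lambda>_. {..<k})"
  define near where "near x = {s \<in> G. 2 * card (far_coords d (\<lambda>i. x i / \<sigma>) s) < d}" for x
  have fin_X: "finite X" and X_ball: "X \<subseteq> lq_ball_fin q d r"
    using cov by (auto simp: lq_covering_def)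
  have g_ball: "grid_point d \<sigma> s \<in> lq_ball_fin q d r" if "s \<in> G" for s
    using grid_point_mem_lq_ball_fin[OF q _ _ _ that[unfolded G_def]] r \<sigma> k\<sigma> by simp
  have "G \<subseteq> (\<Union>x\<in>X. near x)"
  proof
    fix s assume s: "s \<in> G"
    then obtain x where x: "x \<in> X" "lq_norm q (grid_point d \<sigma> s - x) \<le> eps"
      using cov g_ball unfolding lq_covering_def by blast
    have "2 * card (far_coords d (\<lambda>i. x i / \<sigma>) s) < d"
    proof (rule ccontr)
      assume "\<not> 2 * card (far_coords d (\<lambda>i. x i / \<sigma>) s) < d"
      then have "real d \<le> 2 * real (card (far_coords d (\<lambda>i. x i / \<sigma>) s))" by linarith
      moreover have "supp_below d x" using X_ball x(1) by (auto simp: mem_lq_ball_fin_iff)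
      ultimately have "\<sigma> / (4 * flat_coord q d) \<le> lq_norm q (grid_point d \<sigma> s - x)"
        using lq_norm_grid_point_diff_ge[OF q d \<sigma>] by blast
      moreover have "\<sigma> / (4 * flat_coord q d) = r / (4 * real k)"
        using flat_coord_pos[OF d, of q] by (simp add: \<sigma>_def)
      ultimately have "r / (4 * real k) \<le> eps" using x(2) by linarith
      then show False using small k by (simp add: field_simps)
    qed
    then show "s \<in> (\<Union>x\<in>X. near x)" using s x(1) by (auto simp: near_def)
  qed
  then have "card G \<le> card (\<Union>x\<in>X. near x)"
    using fin_X by (intro card_mono) (auto simp: near_def G_def finite_PiE)
  also have "\<dots> \<le> (\<Sum>x\<in>X. card (near x))" using fin_X by (rule card_UN_le)
  finally have "real (card G) \<le> (\<Sum>x\<in>X. real (card (near x)))"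
    by (simp flip: of_nat_sum)
  also have "\<dots> \<le> (\<Sum>x\<in>X. 2 ^ d * real k powr (real d / 2))"
    using card_grid_mostly_near_le[OF k] by (intro sum_mono) (simp add: near_def G_def)
  finally show ?thesis by (simp add: G_def card_PiE)
qed

lemma lq_ball_fin_covering_log_card_ge:
  assumes q: "1 \<le> q" and d: "0 < d" and r: "1 \<le> r" and eps: "0 < eps" "eps \<le> 1/128"
    and cov: "lq_covering q (lq_ball_fin q d r) X eps"
  shows "real d * (log 2 r + 1) \<le> 2 * log 2 (real (card X))"
proof -
  define k where "k = nat \<lfloor>r / (8 * eps)\<rfloor>"
  have "16 * r \<le> r / (8 * eps)" using eps r by (simp add: field_simps)
  then have k_le: "real k \<le> r / (8 * eps)" and k_ge: "8 * r \<le> real k"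
    using r unfolding k_def by linarith+
  then have k: "1 \<le> k" using r by linarith
  have "4 * real k * eps \<le> 4 * (r / (8 * eps)) * eps"
    using k_le eps by (intro mult_right_mono mult_left_mono) auto
  then have "4 * real k * eps < r" using eps r by simp
  then have count: "real k ^ d \<le> real (card X) * (2 ^ d * real k powr (real d / 2))"
    by (rule lq_ball_fin_covering_card_ge[OF q d k eps(1) _ cov])
  have k_pos: "0 < real k" using k by simp
  then have X_pos: "0 < real (card X)"
    using count by (smt (verit) mult_eq_0_iff mult_nonneg_nonneg of_nat_0_le_iff
        powr_ge_zero zero_less_power)
  have "real d * log 2 (real k) = log 2 (real k ^ d)" using k_pos by (simp add: log_nat_power)
  also have "\<dots> \<le> log 2 (real (card X) * (2 ^ d * real k powr (real d / 2)))"
    using count k_pos X_pos by simp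
  also have "\<dots> = log 2 (real (card X)) + real d + real d / 2 * log 2 (real k)"
    using X_pos k_pos by (simp add: log_mult log_powr log_nat_power)
  finally have "real d / 2 * log 2 (real k) \<le> log 2 (real (card X)) + real d" by simp
  moreover have "3 + log 2 r \<le> log 2 (real k)"
  proof -
    have "log 2 (8 * r) \<le> log 2 (real k)" using k_ge r by simp
    moreover have "log 2 (8 * r) = 3 + log 2 r"
      using r by (simp add: log_mult log_nat_power[of 2 2 3, simplified])
    ultimately show ?thesis by simp
  qed
  then have "real d / 2 * (3 + log 2 r) \<le> real d / 2 * log 2 (real k)"
    by (intro mult_left_mono) auto
  ultimately show ?thesis by (simp add: algebra_simps)
qed

definition lattice_box :: "nat \<Rightarrow> nat \<Rightarrow> real \<Rightarrow> (nat \<Rightarrow> real) set" where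
  "lattice_box d K \<sigma> = (\<lambda>s i. if i < d then real_of_int (s i) * \<sigma> else 0)
     ` PiE {..<d} (\<lambda>_. {- int K..int K})"

lemma finite_lattice_box: "finite (lattice_box d K \<sigma>)"
  by (simp add: lattice_box_def finite_PiE)

lemma card_lattice_box_le: "card (lattice_box d K \<sigma>) \<le> (2 * K + 1) ^ d"
proof -
  have "card (lattice_box d K \<sigma>) \<le> card (PiE {..<d} (\<lambda>_. {- int K..int K}))"
    unfolding lattice_box_def by (rule card_image_le) (simp add: finite_PiE)
  also have "\<dots> = nat (int (2 * K + 1)) ^ d" by (simp add: card_PiE ac_simps)
  also have "\<dots> = (2 * K + 1) ^ d" by (simp only: nat_int)
  finally show ?thesis .
qed

lemma exists_int_mult_toward_zero:
  fixes a \<sigma> :: real assumes "0 < \<sigma>"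
  obtains n :: int where "\<bar>real_of_int n * \<sigma>\<bar> \<le> \<bar>a\<bar>" "\<bar>a - real_of_int n * \<sigma>\<bar> \<le> \<sigma>"
proof -
  define m where "m = \<lfloor>\<bar>a\<bar> / \<sigma>\<rfloor>"
  have "real_of_int m \<le> \<bar>a\<bar> / \<sigma>" "\<bar>a\<bar> / \<sigma> < real_of_int m + 1" "0 \<le> m"
    using assms by (auto simp: m_def)
  then have m: "real_of_int m * \<sigma> \<le> \<bar>a\<bar>" "\<bar>a\<bar> < real_of_int m * \<sigma> + \<sigma>" "0 \<le> real_of_int m * \<sigma>"
    using assms by (auto simp: field_simps)
  show thesis
  proof (cases "0 \<le> a")
    case True
    then show thesis using m by (intro that[of m]) auto
  next
    case False
    then show thesis using m by (intro that[of "- m"]) auto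
  qed
qed

lemma lattice_box_rounding:
  assumes q: "1 \<le> q" and \<sigma>: "0 < \<sigma>" and a: "a \<in> lq_ball_fin q d r" and K: "r \<le> real K * \<sigma>"
  obtains y where "y \<in> lq_ball_fin q d r \<inter> lattice_box d K \<sigma>" "\<And>i. \<bar>a i - y i\<bar> \<le> \<sigma>"
proof -
  have a_supp: "supp_below d a" and a_norm: "lq_norm q a \<le> r"
    using a by (auto simp: mem_lq_ball_fin_iff)
  have "\<forall>i. \<exists>m :: int. \<bar>real_of_int m * \<sigma>\<bar> \<le> \<bar>a i\<bar> \<and> \<bar>a i - real_of_int m * \<sigma>\<bar> \<le> \<sigma>"
    using exists_int_mult_toward_zero[OF \<sigma>] by metis
  then obtain n :: "nat \<Rightarrow> int" where n: "\<And>i. \<bar>real_of_int (n i) * \<sigma>\<bar> \<le> \<bar>a i\<bar>"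
    "\<And>i. \<bar>a i - real_of_int (n i) * \<sigma>\<bar> \<le> \<sigma>"
    by metis
  define y where "y i = (if i < d then real_of_int (n i) * \<sigma> else 0)" for i
  have y_supp: "supp_below d y" by (simp add: supp_below_def y_def)
  have "y \<in> lq_ball_fin q d r"
    using lq_norm_mono[OF q a_supp y_supp] n(1) a_norm
    by (force simp: mem_lq_ball_fin_iff y_supp y_def)
  moreover have "y \<in> lattice_box d K \<sigma>"
  proof -
    have "n i \<in> {- int K..int K}" for i
    proof -
      have "\<bar>real_of_int (n i)\<bar> * \<sigma> = \<bar>real_of_int (n i) * \<sigma>\<bar>" using \<sigma> by (simp add: abs_mult)
      also have "\<dots> \<le> real K * \<sigma>"
        using n(1)[of i] abs_le_lq_norm[OF q a_supp, of i] a_norm K by linarith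
      finally have "real_of_int \<bar>n i\<bar> \<le> real_of_int (int K)" using \<sigma> by simp
      then show ?thesis by auto
    qed
    then have "restrict n {..<d} \<in> PiE {..<d} (\<lambda>_. {- int K..int K})"
      by (simp add: restrict_PiE_iff)
    moreover have "y = (\<lambda>i. if i < d then real_of_int (restrict n {..<d} i) * \<sigma> else 0)"
      by (simp add: y_def fun_eq_iff)
    ultimately show ?thesis unfolding lattice_box_def by blast
  qed
  moreover have "\<bar>a i - y i\<bar> \<le> \<sigma>" for i
    using n(2)[of i] a_supp \<sigma> by (simp add: y_def supp_below_def)
  ultimately show thesis by (intro that) blast+
qed

lemma lq_ball_fin_lattice_covering:
  assumes q: "1 \<le> q" and \<sigma>: "0 < \<sigma>" and eps: "0 \<le> eps" "real d * \<sigma> \<le> eps"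
    and K: "r \<le> real K * \<sigma>"
  shows "lq_covering q (lq_ball_fin q d r) (lq_ball_fin q d r \<inter> lattice_box d K \<sigma>) eps"
  unfolding lq_covering_def
proof (intro conjI ballI)
  show "finite (lq_ball_fin q d r \<inter> lattice_box d K \<sigma>)" by (simp add: finite_lattice_box)
  show "lq_ball_fin q d r \<inter> lattice_box d K \<sigma> \<subseteq> lq_ball_fin q d r" by blast
  fix a assume a: "a \<in> lq_ball_fin q d r"
  obtain y where y: "y \<in> lq_ball_fin q d r \<inter> lattice_box d K \<sigma>" and close: "\<And>i. \<bar>a i - y i\<bar> \<le> \<sigma>"
    using lattice_box_rounding[OF q \<sigma> a K] by blast
  have "supp_below d (a - y)" using a y by (simp add: mem_lq_ball_fin_iff supp_below_diff)
  then have "lq_norm q (a - y) \<le> eps"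
  proof (rule lq_norm_le_if_coords_le[OF q _ eps(1)])
    fix i assume "i < d"
    then have "\<sigma> \<le> eps * (1 / real d)" using eps(2) by (simp add: field_simps)
    also have "\<dots> \<le> eps * flat_coord q d"
      using flat_coord_ge[OF q] \<open>i < d\<close> eps(1) by (intro mult_left_mono) auto
    finally show "\<bar>(a - y) i\<bar> \<le> eps * flat_coord q d" using close[of i] by simp
  qed
  then show "\<exists>x\<in>lq_ball_fin q d r \<inter> lattice_box d K \<sigma>. lq_norm q (a - x) \<le> eps" using y by blast
qed

lemma lq_ball_fin_small_covering_exists:
  assumes q: "1 \<le> q" and eps: "0 < eps" "eps \<le> r"
  shows "\<exists>X. lq_covering q (lq_ball_fin q d r) X eps
           \<and> log 2 (real (card X)) \<le> real d * log 2 (5 * (real d + 1) * r / eps)"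
proof -
  define \<rho> where "\<rho> = (real d + 1) * r / eps"
  define \<sigma> where "\<sigma> = eps / (real d + 1)"
  define K where "K = nat \<lceil>r / \<sigma>\<rceil>"
  define X where "X = lq_ball_fin q d r \<inter> lattice_box d K \<sigma>"
  have \<sigma>: "0 < \<sigma>" using eps by (simp add: \<sigma>_def)
  have ratio: "r / \<sigma> = \<rho>" by (simp add: \<sigma>_def \<rho>_def)
  have "1 * r \<le> (real d + 1) * r" using eps by (intro mult_right_mono) auto
  then have "eps \<le> (real d + 1) * r" using eps(2) by (metis mult_1 order.trans)
  then have \<rho>_ge: "1 \<le> \<rho>" using eps by (simp add: \<rho>_def le_divide_eq)
  have "r \<le> real K * \<sigma>"
    using \<sigma> eps by (simp add: K_def pos_divide_le_eq[symmetric] real_nat_ceiling_ge)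
  moreover have "real d * \<sigma> \<le> eps" using eps by (simp add: \<sigma>_def field_simps)
  ultimately have cov: "lq_covering q (lq_ball_fin q d r) X eps"
    unfolding X_def using eps by (intro lq_ball_fin_lattice_covering[OF q \<sigma>]) auto
  have "real K \<le> \<rho> + 1" using ratio \<rho>_ge by (simp add: K_def)
  then have K: "real (2 * K + 1) \<le> 5 * \<rho>" using \<rho>_ge by simp
  have log_nonneg: "0 \<le> log 2 (5 * \<rho>)" using \<rho>_ge by simp
  have "log 2 (real (card X)) \<le> real d * log 2 (5 * \<rho>)"
  proof (cases "card X = 0")
    case True
    then have "log 2 (real (card X)) = 0" by (simp add: log_def)
    then show ?thesis using log_nonneg by simp
  next
    case False
    have "card X \<le> (2 * K + 1) ^ d"
      unfolding X_def
      by (rule order.trans[OF card_mono card_lattice_box_le]) (auto simp: finite_lattice_box)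
    then have "real (card X) \<le> real (2 * K + 1) ^ d" by (metis of_nat_le_iff of_nat_power)
    then have "log 2 (real (card X)) \<le> log 2 (real (2 * K + 1) ^ d)"
      using False by simp
    also have "\<dots> = real d * log 2 (real (2 * K + 1))" by (simp add: log_nat_power)
    also have "\<dots> \<le> real d * log 2 (5 * \<rho>)"
      using K by (intro mult_left_mono) auto
    finally show ?thesis .
  qed
  moreover have "5 * \<rho> = 5 * (real d + 1) * r / eps" by (simp add: \<rho>_def)
  ultimately show ?thesis using cov by metis
qed

lemma bigo_imp_uniform_bound:
  fixes f g :: "nat \<Rightarrow> real"
  assumes "f \<in> O(g)" and g_pos: "\<And>M. 1 \<le> M \<Longrightarrow> 0 < g M"
  shows "\<exists>C>0. \<forall>M\<ge>1. f M \<le> C * g M"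
proof -
  obtain c N where c: "0 < c" and N: "\<And>M. N \<le> M \<Longrightarrow> \<bar>f M\<bar> \<le> c * \<bar>g M\<bar>"
    using assms(1) by (elim landau_o.bigE) (auto simp: eventually_sequentially)
  define C where "C = c + (\<Sum>M\<in>{1..N}. \<bar>f M / g M\<bar>)"
  have sum_nonneg: "0 \<le> (\<Sum>M\<in>{1..N}. \<bar>f M / g M\<bar>)" by (simp add: sum_nonneg)
  have "f M \<le> C * g M" if M: "1 \<le> M" for M
  proof (cases "N \<le> M")
    case True
    have "f M \<le> c * g M" using N[OF True] g_pos[OF M] by simp
    also have "\<dots> \<le> C * g M" using g_pos[OF M] sum_nonneg by (simp add: C_def)
    finally show ?thesis .
  next
    case False
    then have "\<bar>f M / g M\<bar> \<le> (\<Sum>M\<in>{1..N}. \<bar>f M / g M\<bar>)"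
      using M by (intro member_le_sum) auto
    then have "f M / g M \<le> C" using c abs_ge_self[of "f M / g M"] unfolding C_def by linarith
    then show ?thesis using g_pos[OF M] by (simp add: pos_divide_le_eq)
  qed
  moreover have "0 < C" using c sum_nonneg by (simp add: C_def)
  ultimately show ?thesis by blast
qed

lemma gamma_encodable_imp_bigo:
  assumes q: "1 \<le> q" and r: "\<And>M. 1 \<le> r M" and \<gamma>: "0 < \<gamma>" and h: "0 < h"
    and enc: "gamma_encodable q (\<lambda>M. lq_ball_fin q (d M) (r M)) \<gamma>"
  shows "(\<lambda>M. real (d M) * (log 2 (r M) + 1)) \<in> O(\<lambda>M. real M powr (1 + h))"
proof -
  obtain c1 c2 where c1: "0 < c1" and c2: "0 < c2" and enc_M: "\<And>M. 1 \<le> M \<Longrightarrow> \<exists>X.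
      lq_covering q (lq_ball_fin q (d M) (r M)) X (c1 * real M powr (-\<gamma>))
      \<and> log 2 (real (card X)) \<le> c2 * real M powr (1 + h)"
    using enc h unfolding gamma_encodable_def has_encoding_def by blast
  have "((\<lambda>M. c1 * real M powr (-\<gamma>)) \<longlongrightarrow> 0) sequentially"
    using \<gamma> by real_asymp
  then have "eventually (\<lambda>M. c1 * real M powr (-\<gamma>) < 1/128) sequentially"
    by (rule order_tendstoD) simp
  then have "eventually (\<lambda>M. norm (real (d M) * (log 2 (r M) + 1))
      \<le> 2 * c2 * norm (real M powr (1 + h))) sequentially"
    using eventually_ge_at_top[of 1]
  proof eventually_elim
    case (elim M)
    obtain X where cov: "lq_covering q (lq_ball_fin q (d M) (r M)) X (c1 * real M powr (-\<gamma>))"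
      and card: "log 2 (real (card X)) \<le> c2 * real M powr (1 + h)"
      using enc_M[OF elim(2)] by blast
    have "real (d M) * (log 2 (r M) + 1) \<le> 2 * c2 * real M powr (1 + h)"
    proof (cases "d M = 0")
      case True
      then show ?thesis using c2 by simp
    next
      case False
      then have "real (d M) * (log 2 (r M) + 1) \<le> 2 * log 2 (real (card X))"
        using elim c1
        by (intro lq_ball_fin_covering_log_card_ge[OF q _ r _ _ cov]) auto
      then show ?thesis using card by simp
    qed
    moreover have "0 \<le> log 2 (r M)" using r[of M] by simp
    ultimately show ?case by simp
  qed
  then show ?thesis by (rule landau_o.bigI[rotated]) (use c2 in simp)
qed

lemma covering_exponent_bounds:
  fixes m r t \<gamma> :: real
  assumes m: "1 \<le> m" and r: "1 \<le> r" and \<gamma>: "0 \<le> \<gamma>" and dt: "real d * (log 2 r + 1) \<le> t"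
  shows "0 \<le> real d * log 2 (5 * (real d + 1) * r / m powr (-\<gamma>))"
    and "real d * log 2 (5 * (real d + 1) * r / m powr (-\<gamma>))
           \<le> 3 * t + t * log 2 (t + 1) + \<gamma> * t * log 2 m"
proof -
  have log_r: "0 \<le> log 2 r" using r by simp
  have "real d \<le> real d * (log 2 r + 1)" using log_r by (simp add: mult_le_cancel_left1)
  then have d: "real d \<le> t" using dt by linarith
  have "log 2 5 \<le> log 2 (8::real)" by simp
  moreover have "log 2 (8::real) = 3" using log_nat_power[of 2 2 3, simplified] by simp
  ultimately have log_5: "log 2 5 \<le> (3::real)" by linarith
  define u where "u = real d + 1"
  have u: "1 \<le> u" by (simp add: u_def)
  have "m powr (-\<gamma>) \<le> 1" using powr_mono[of "-\<gamma>" 0 m] \<gamma> m by simp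
  moreover have "1 \<le> u * r" using mult_mono[of 1 u 1 r] u r by simp
  ultimately have "1 \<le> 5 * u * r / m powr (-\<gamma>)" using m by (simp add: le_divide_eq)
  then show "0 \<le> real d * log 2 (5 * (real d + 1) * r / m powr (-\<gamma>))" by (simp add: u_def)
  have "log 2 (5 * u * r / m powr (-\<gamma>)) = log 2 5 + log 2 u + log 2 r + \<gamma> * log 2 m"
    using u r m by (simp add: log_mult log_divide log_powr)
  then have "real d * log 2 (5 * u * r / m powr (-\<gamma>))
      = real d * (log 2 5 + log 2 r) + real d * log 2 u + \<gamma> * real d * log 2 m"
    by (simp add: algebra_simps)
  also have "\<dots> \<le> 3 * t + t * log 2 (t + 1) + \<gamma> * t * log 2 m"
  proof (intro add_mono)
    have "real d * (log 2 5 + log 2 r) \<le> real d * (3 * (log 2 r + 1))"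
      using log_5 log_r by (intro mult_left_mono) auto
    also have "\<dots> = 3 * (real d * (log 2 r + 1))" by (simp only: mult.left_commute)
    finally show "real d * (log 2 5 + log 2 r) \<le> 3 * t" using dt by linarith
    show "real d * log 2 u \<le> t * log 2 (t + 1)"
      using d u by (intro mult_mono) (auto simp: u_def)
    show "\<gamma> * real d * log 2 m \<le> \<gamma> * t * log 2 m"
      using d \<gamma> m by (intro mult_right_mono mult_left_mono) auto
  qed
  finally show "real d * log 2 (5 * (real d + 1) * r / m powr (-\<gamma>))
      \<le> 3 * t + t * log 2 (t + 1) + \<gamma> * t * log 2 m"
    by (simp add: u_def)
qed

lemma covering_exponent_bigo:
  assumes r: "\<And>M. 1 \<le> r M" and \<gamma>: "0 < \<gamma>" and h: "0 < h"
    and D: "(\<lambda>M. real (d M) * (log 2 (r M) + 1)) \<in> O(\<lambda>M. real M powr (1 + h/2))"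
  shows "(\<lambda>M. real (d M) * log 2 (5 * (real (d M) + 1) * r M / real M powr (-\<gamma>)))
           \<in> O(\<lambda>M. real M powr (1 + h))"
proof -
  obtain c where c: "0 < c" and c_bound: "eventually (\<lambda>M. \<bar>real (d M) * (log 2 (r M) + 1)\<bar>
      \<le> c * \<bar>real M powr (1 + h/2)\<bar>) sequentially"
    using D by (elim landau_o.bigE) auto
  define t where "t M = c * real M powr (1 + h/2)" for M :: nat
  define E where "E M = 3 * t M + t M * log 2 (t M + 1) + \<gamma> * t M * log 2 (real M)" for M
  have "eventually (\<lambda>M. norm (real (d M) * log 2 (5 * (real (d M) + 1) * r M
      / real M powr (-\<gamma>))) \<le> norm (E M)) sequentially"
    using c_bound eventually_ge_at_top[of 1]
  proof eventually_elim
    case (elim M)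
    then have "real (d M) * (log 2 (r M) + 1) \<le> t M" using r[of M] by (simp add: t_def)
    then show ?case
      using covering_exponent_bounds[of "real M" "r M" \<gamma> "d M" "t M"] elim(2) r[of M] \<gamma>
      by (simp add: E_def)
  qed
  then have "(\<lambda>M. real (d M) * log 2 (5 * (real (d M) + 1) * r M / real M powr (-\<gamma>))) \<in> O(E)"
    by (rule landau_o.big_mono)
  moreover have "E \<in> O(\<lambda>M. real M powr (1 + h))"
    unfolding E_def t_def using c h \<gamma> by real_asymp
  ultimately show ?thesis by (rule landau_o.big_trans)
qed

lemma bigo_imp_inf_encodable:
  assumes q: "1 \<le> q" and r: "\<And>M. 1 \<le> r M"
    and D: "\<forall>h>0. (\<lambda>M. real (d M) * (log 2 (r M) + 1)) \<in> O(\<lambda>M. real M powr (1 + h))"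
  shows "inf_encodable q (\<lambda>M. lq_ball_fin q (d M) (r M))"
  unfolding inf_encodable_def gamma_encodable_def has_encoding_def
proof (intro allI impI)
  fix \<gamma> h :: real assume \<gamma>: "0 < \<gamma>" and h: "0 < h"
  define B where "B M = real (d M) * log 2 (5 * (real (d M) + 1) * r M / real M powr (-\<gamma>))" for M
  have "B \<in> O(\<lambda>M. real M powr (1 + h))"
    unfolding B_def using D h by (intro covering_exponent_bigo[OF r \<gamma> h]) simp
  then have "\<exists>c2>0. \<forall>M\<ge>1. B M \<le> c2 * real M powr (1 + h)"
    by (rule bigo_imp_uniform_bound) simp
  then obtain c2 where c2: "0 < c2" and B_le: "\<And>M. 1 \<le> M \<Longrightarrow> B M \<le> c2 * real M powr (1 + h)"
    by blast
  have "\<exists>X. lq_covering q (lq_ball_fin q (d M) (r M)) X (1 * real M powr (-\<gamma>))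
      \<and> log 2 (real (card X)) \<le> c2 * real M powr (1 + h)" if M: "1 \<le> M" for M
  proof -
    have "real M powr (-\<gamma>) \<le> 1" using powr_mono[of "-\<gamma>" 0 "real M"] \<gamma> M by simp
    then obtain X where "lq_covering q (lq_ball_fin q (d M) (r M)) X (real M powr (-\<gamma>))"
      and "log 2 (real (card X)) \<le> B M"
      using lq_ball_fin_small_covering_exists[OF q, of "real M powr (-\<gamma>)" "r M" "d M"] r[of M] M
      by (force simp: B_def)
    then show ?thesis using B_le[OF M] by auto
  qed
  then show "\<exists>c1>0. \<exists>c2>0. \<forall>M\<ge>1. \<exists>X. lq_covering q (lq_ball_fin q (d M) (r M)) X (c1 * real M powr (-\<gamma>))
      \<and> log 2 (real (card X)) \<le> c2 * real M powr (1 + h)"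
    using c2 by (intro exI[of _ 1]) auto
qed

theorem mainTheorem12:
  fixes q :: ereal and d :: "nat \<Rightarrow> nat" and r :: "nat \<Rightarrow> real"
  assumes "1 \<le> q" and "\<And>M. r M \<ge> 1"
  shows "(inf_encodable q (\<lambda>M. lq_ball_fin q (d M) (r M))
          \<or> (\<forall>\<gamma>>0. \<not> gamma_encodable q (\<lambda>M. lq_ball_fin q (d M) (r M)) \<gamma>))
       \<and> (inf_encodable q (\<lambda>M. lq_ball_fin q (d M) (r M)) \<longleftrightarrow>
          (\<forall>h>0. (\<lambda>M. real (d M) * (log 2 (r M) + 1)) \<in> O(\<lambda>M. real M powr (1 + h))))"
proof -
  let ?\<Sigma> = "\<lambda>M. lq_ball_fin q (d M) (r M)"
  let ?P = "\<forall>h>0. (\<lambda>M. real (d M) * (log 2 (r M) + 1)) \<in> O(\<lambda>M. real M powr (1 + h))"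
  have encodable_imp_P: "?P" if "0 < \<gamma>" "gamma_encodable q ?\<Sigma> \<gamma>" for \<gamma>
    using gamma_encodable_imp_bigo[OF assms(1)] assms(2) that by blast
  have P_imp_inf: "?P \<Longrightarrow> inf_encodable q ?\<Sigma>"
    using bigo_imp_inf_encodable[OF assms(1)] assms(2) by blast
  have "inf_encodable q ?\<Sigma> \<Longrightarrow> gamma_encodable q ?\<Sigma> 1"
    by (simp add: inf_encodable_def)
  then show ?thesis using encodable_imp_P P_imp_inf zero_less_one by blast
qed

end
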